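(* The function $g(x)=\dfrac{\exp(H(x))\log(H(x))}{x}$ is increasing on $[4,\infty)$.
   Context: $H(x)=\int_0^1\frac{t^x-1}{t-1}\,dt$ for real $x\ge1$; it is smooth, satisfies $H(n)=1+\frac12+\cdots+\frac1n$ for $n\in\mathbb{N}$, and $H(x)=\psi(x+1)+\gamma$ with $\psi=\Gamma'/\Gamma$ the digamma function. *)

theory Defs
  imports "HOL-Analysis.Analysis"
begin

text \<open>Harmonic-number interpolation H(x) = int_0^1 (t^x - 1)/(t - 1) dt, for real x \<ge> 1.\<close>
definition H :: "real \<Rightarrow> real" where
  "H x = integral {0..1} (\<lambda>t. (t powr x - 1) / (t - 1))"

definition g :: "real \<Rightarrow> real" where
  "g x = exp (H x) * ln (H x) / x"

end

theory Submission
  imports Defs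
begin

text \<open>Expanding \<open>(t powr x - 1) / (t - 1)\<close> as a geometric series identifies \<open>H x\<close> with
  \<open>\<psi>(x + 1) + \<gamma>\<close>, so \<open>H\<close> is differentiable with \<open>H' x = \<psi>'(x + 1) > 1 / (x + 1)\<close>.
  Writing \<open>u = H x\<close>, the sign of \<open>g' x\<close> is that of \<open>x H' x (ln u + 1 / u) - ln u\<close>, which is
  positive as soon as \<open>u ln u \<le> x\<close>. For \<open>x \<ge> 4\<close> we have \<open>u \<ge> H 4 = 25/12 \<ge> 2\<close>, hence
  \<open>u ln u \<le> exp (u - 1) - 1\<close>, and \<open>exp (u - 1) \<le> x + 1\<close> by the bound \<open>H n \<le> 1 + ln n\<close>.\<close>

lemma has_integral_power_mult_one_minus_powr:
  fixes x :: real assumes "0 \<le> x"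
  shows "((\<lambda>t. t ^ k * (1 - t powr x)) has_integral (1 / (real k + 1) - 1 / (real k + x + 1))) {0..1}"
proof -
  have "((\<lambda>t. t powr real k) has_integral (1 / (real k + 1))) {0..1}"
    using has_integral_powr_from_0[of "real k" 1] by (simp add: add.commute)
  moreover have "((\<lambda>t. t powr (real k + x)) has_integral (1 / (real k + x + 1))) {0..1}"
    using has_integral_powr_from_0[of "real k + x" 1] assms by (simp add: add_ac)
  ultimately have "((\<lambda>t. t powr real k - t powr (real k + x))
      has_integral (1 / (real k + 1) - 1 / (real k + x + 1))) {0..1}"
    by (rule has_integral_diff)
  then show ?thesis
    by (rule has_integral_spike_finite[of "{0}", rotated 2])
       (auto simp: powr_add powr_realpow algebra_simps)
qed

lemma Digamma_plus_euler_mascheroni_sums: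
  fixes x :: real assumes "0 \<le> x"
  shows "(\<lambda>k. 1 / (real k + 1) - 1 / (real k + x + 1)) sums (Digamma (x + 1) + euler_mascheroni)"
proof -
  have "x + 1 \<noteq> 0" using assms by simp
  from summable_Digamma[OF this]
  have "(\<lambda>n. inverse (of_nat (Suc n)) - inverse (x + 1 + of_nat n))
          sums (Digamma (x + 1) + euler_mascheroni)"
    by (simp add: Digamma_def summable_sums)
  then show ?thesis by (simp add: inverse_eq_divide add_ac)
qed

text \<open>Monotone convergence applied to the partial sums of \<open>\<Sum>k. t ^ k * (1 - t powr x)\<close>.\<close>
lemma H_eq_Digamma:
  fixes x :: real assumes x: "0 \<le> x"
  shows "H x = Digamma (x + 1) + euler_mascheroni"
proof -
  define S where "S n t = (\<Sum>k<n. t ^ k * (1 - t powr x))" for n t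
  define s where "s n = (\<Sum>k<n. 1 / (real k + 1) - 1 / (real k + x + 1))" for n
  have S_integral: "(S n has_integral s n) {0..1}" for n
    unfolding S_def s_def by (intro has_integral_sum has_integral_power_mult_one_minus_powr x) auto
  have S_mono: "S n t \<le> S (Suc n) t" if "t \<in> {0..1}" for n t
    using that x powr_mono2[of x t 1] by (auto simp: S_def)
  have S_lim: "(\<lambda>n. S n t) \<longlonglongrightarrow> (t powr x - 1) / (t - 1)" if "t \<in> {0..1}" for t
  proof (cases "t = 1")
    case True then show ?thesis by (simp add: S_def)
  next
    case False
    with that have "norm t < 1" by auto
    from sums_mult2[OF geometric_sums[OF this], of "1 - t powr x"]
    have "(\<lambda>k. t ^ k * (1 - t powr x)) sums ((1 - t powr x) / (1 - t))" by simp
    also have "(1 - t powr x) / (1 - t) = (t powr x - 1) / (t - 1)"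
      using False by (simp add: field_simps)
    finally show ?thesis by (simp add: S_def sums_def)
  qed
  have s_lim: "s \<longlonglongrightarrow> Digamma (x + 1) + euler_mascheroni"
    using Digamma_plus_euler_mascheroni_sums[OF x] by (simp add: s_def[abs_def] sums_def)
  have integral_S: "(\<lambda>n. integral {0..1} (S n)) = s"
    using S_integral by (auto intro: integral_unique)
  have "bounded (range (\<lambda>n. integral {0..1} (S n)))"
    unfolding integral_S using s_lim by (rule convergent_imp_bounded)
  with monotone_convergence_increasing[of S "{0..1}", OF _ S_mono S_lim] S_integral
  have "(\<lambda>n. integral {0..1} (S n)) \<longlonglongrightarrow> H x"
    by (auto simp: integrable_on_def H_def)
  then have "s \<longlonglongrightarrow> H x"
    by (simp only: integral_S)
  with s_lim show ?thesis by (simp add: LIMSEQ_unique)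
qed

lemma H_of_nat: "H (real n) = harm n"
proof -
  have "Digamma (real (Suc n)) = harm n - euler_mascheroni"
    by (rule Digamma_of_nat)
  then show ?thesis
    by (simp add: H_eq_Digamma add.commute)
qed

lemma H_mono:
  assumes "0 \<le> x" "x \<le> y"
  shows "H x \<le> H y"
  using assms Digamma_real_mono[of "x + 1" "y + 1"] by (simp add: H_eq_Digamma)

lemma H_le_one_plus_ln:
  assumes "0 < x"
  shows "H x \<le> 1 + ln (x + 1)"
proof -
  define n where "n = nat \<lceil>x\<rceil>"
  have n: "x \<le> real n" "real n \<le> x + 1" "0 < n"
    using assms by (auto simp: n_def)
  have "H x \<le> harm n"
    using H_mono[of x "real n"] n assms by (simp add: H_of_nat)
  also have "harm n \<le> 1 + ln (real n)"
    using euler_mascheroni_sequence_decreasing[of 1 n] n by (simp add: harm_def)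
  also have "ln (real n) \<le> ln (x + 1)"
    using n by simp
  finally show ?thesis by simp
qed

lemma H_has_real_derivative:
  assumes "0 < x"
  shows "(H has_real_derivative Polygamma 1 (x + 1)) (at x)"
proof (rule has_field_derivative_transform_within_open[where S = "{0<..}"])
  have "x + 1 \<notin> \<int>\<^sub>\<le>\<^sub>0"
    using assms by (auto elim!: nonpos_Ints_cases)
  from has_field_derivative_Polygamma[OF this, of 0 UNIV]
  have "(Digamma has_real_derivative Polygamma 1 (x + 1)) (at (x + 1))" by simp
  then have "((\<lambda>y. Digamma (y + 1)) has_real_derivative Polygamma 1 (x + 1)) (at x)"
    by (simp add: DERIV_shift)
  from DERIV_add[OF this DERIV_const]
  show "((\<lambda>y. Digamma (y + 1) + euler_mascheroni) has_real_derivative Polygamma 1 (x + 1)) (at x)"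
    by simp
qed (use assms in \<open>auto simp: H_eq_Digamma\<close>)

text \<open>Compare \<open>\<psi>' x = \<Sum>k. 1 / (x + k)\<^sup>2\<close> termwise with the telescoping
  series \<open>1 / x = \<Sum>k. 1 / (x + k) - 1 / (x + k + 1)\<close>.\<close>
lemma Polygamma_1_gt_inverse:
  fixes x :: real assumes x: "0 < x"
  shows "1 / x < Polygamma 1 x"
proof -
  define a where "a k = x + real k" for k
  have a_pos: "0 < a k" for k
    using x by (simp add: a_def)
  have "(\<lambda>k. inverse ((a k)\<^sup>2)) sums Polygamma 1 x"
    using Polygamma_LIMSEQ[of x 1] x by (simp add: a_def power2_eq_square)
  moreover have "(\<lambda>k. inverse (a k) - inverse (a (Suc k))) sums (1 / x)"
  proof -
    have "(\<lambda>k. inverse (x + real k)) \<longlonglongrightarrow> 0"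
      by (intro filterlim_compose[OF tendsto_inverse_0]
                tendsto_add_filterlim_at_infinity[OF tendsto_const] tendsto_of_nat)
    from telescope_sums'[OF this] show ?thesis
      by (simp add: a_def inverse_eq_divide)
  qed
  ultimately have diff_sums: "(\<lambda>k. inverse ((a k)\<^sup>2) - (inverse (a k) - inverse (a (Suc k))))
      sums (Polygamma 1 x - 1 / x)"
    by (rule sums_diff)
  have "inverse ((a k)\<^sup>2) - (inverse (a k) - inverse (a (Suc k))) = 1 / ((a k)\<^sup>2 * (a k + 1))" for k
    using a_pos[of k] by (simp add: a_def divide_simps power2_eq_square)
  then have "0 < inverse ((a k)\<^sup>2) - (inverse (a k) - inverse (a (Suc k)))" for k
    using a_pos[of k] by simp
  with diff_sums have "0 < Polygamma 1 x - 1 / x"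
    using suminf_pos[OF sums_summable[OF diff_sums]] by (simp add: sums_iff)
  then show ?thesis by simp
qed

lemma mult_ln_le_exp_minus_one:
  fixes u :: real assumes u: "2 \<le> u"
  shows "u * ln u \<le> exp (u - 1) - 1"
proof -
  define f where "f u = exp (u - 1) - 1 - u * ln u" for u :: real
  have "1 + 3/4 + (3/4)\<^sup>2 / 2 \<le> exp (3/4 :: real)"
    by (rule exp_lower_Taylor_quadratic) simp
  then have "2 < exp (3/4 :: real)"
    by (simp add: power2_eq_square)
  then have "ln 2 < (3/4 :: real)"
    by (metis exp_gt_zero ln_exp ln_less_cancel_iff zero_less_numeral)
  moreover have "5/2 \<le> exp (1 :: real)"
    using exp_lower_Taylor_quadratic[of 1] by simp
  ultimately have "0 \<le> f 2"
    by (simp add: f_def)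
  also have "f 2 \<le> f u"
  proof (rule DERIV_nonneg_imp_nondecreasing[OF u])
    fix y :: real assume y: "2 \<le> y" "y \<le> u"
    have "(f has_real_derivative exp (y - 1) - (ln y + 1)) (at y)"
      unfolding f_def[abs_def] using y by (auto intro!: derivative_eq_intros)
    moreover have "0 \<le> exp (y - 1) - (ln y + 1)"
      using exp_ge_add_one_self[of "y - 1"] ln_le_minus_one[of y] y by simp
    ultimately show "\<exists>d. (f has_real_derivative d) (at y) \<and> 0 \<le> d" by blast
  qed
  finally show ?thesis by (simp add: f_def)
qed

lemma two_le_H:
  assumes "4 \<le> x"
  shows "2 \<le> H x"
proof -
  have "H 4 = 25 / 12"
    using H_of_nat[of 4] by (simp add: harm_Suc eval_nat_numeral harm_def)
  with H_mono[of 4 x] assms show ?thesis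
    by simp
qed

lemma H_mult_ln_H_le:
  assumes "0 < x" "2 \<le> H x"
  shows "H x * ln (H x) \<le> x"
proof -
  have "H x * ln (H x) \<le> exp (H x - 1) - 1"
    using assms(2) by (rule mult_ln_le_exp_minus_one)
  also have "exp (H x - 1) \<le> exp (ln (x + 1))"
    using H_le_one_plus_ln[OF assms(1)] by simp
  also have "exp (ln (x + 1)) = x + 1"
    using assms(1) by simp
  finally show ?thesis by simp
qed

lemma g_has_real_derivative:
  assumes "0 < x" "0 < H x"
  shows "(g has_real_derivative
      exp (H x) * (x * Polygamma 1 (x + 1) * (ln (H x) + 1 / H x) - ln (H x)) / x\<^sup>2) (at x)"
proof -
  define u p where "u = H x" and "p = Polygamma 1 (x + 1)"
  have "((\<lambda>x. exp (H x) * ln (H x) / x) has_real_derivative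
      ((exp u * p * ln u + exp u * (p / u)) * x - exp u * ln u) / x\<^sup>2) (at x)"
    using H_has_real_derivative[OF assms(1)] assms
    by (auto intro!: derivative_eq_intros simp: u_def p_def power2_eq_square)
  moreover have "(exp u * p * ln u + exp u * (p / u)) * x - exp u * ln u
      = exp u * (x * p * (ln u + 1 / u) - ln u)"
    by (simp add: algebra_simps)
  ultimately show ?thesis
    by (simp add: g_def[abs_def] u_def p_def)
qed

lemma g_derivative_factor_pos:
  fixes x p u :: real
  assumes x: "0 < x" and u: "1 < u" and p: "1 / (x + 1) < p" and u_ln_u: "u * ln u \<le> x"
  shows "0 < x * p * (ln u + 1 / u) - ln u"
proof -
  have pos: "0 < x * (ln u + 1 / u)"
    using x u by (simp add: add_pos_pos)
  have "(x + 1) * ln u \<le> x * (ln u + 1 / u)"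
    using u_ln_u u by (simp add: field_simps)
  then have "ln u \<le> x * (ln u + 1 / u) / (x + 1)"
    using x by (simp add: field_simps)
  also have "\<dots> < p * (x * (ln u + 1 / u))"
    using mult_strict_right_mono[OF p pos] by simp
  finally show ?thesis by (simp add: algebra_simps)
qed

theorem mainTheorem17:
  shows "strict_mono_on {4..} g"
proof (rule strict_mono_onI)
  fix r s :: real assume rs: "r \<in> {4..}" "s \<in> {4..}" "r < s"
  show "g r < g s"
  proof (rule DERIV_pos_imp_increasing[OF rs(3)])
    fix x assume "r \<le> x" "x \<le> s"
    with rs have x: "4 \<le> x" by auto
    have "2 \<le> H x"
      using x by (rule two_le_H)
    moreover have "H x * ln (H x) \<le> x"
      using x \<open>2 \<le> H x\<close> by (intro H_mult_ln_H_le) auto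
    ultimately have "0 < x * Polygamma 1 (x + 1) * (ln (H x) + 1 / H x) - ln (H x)"
      using x Polygamma_1_gt_inverse[of "x + 1"] by (intro g_derivative_factor_pos) auto
    then show "\<exists>d. (g has_real_derivative d) (at x) \<and> 0 < d"
      using g_has_real_derivative[of x] x \<open>2 \<le> H x\<close> by force
  qed
qed

end
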